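(* Fix integers $r\ge2$ and $k\ge1$. Let $H$ be a finite graph with minimum degree at least $2rk$, and let $G$ be the exact $(r-1)$-subdivision of $H$. Then $\mathrm{fw}_r(G)>k$.
   Context: Graphs are finite, simple, undirected. The exact $s$-subdivision of $H$ is obtained by replacing every edge of $H$ by a path of length $s+1$ (with new internal vertices). A $k$-flip of $G$ is obtained by choosing a partition of $V(G)$ into at most $k$ parts and, for some pairs $A,B$ of (possibly equal) parts, inverting adjacency of every pair of distinct $x\in A,y\in B$. Flipper game of radius $r$ and width $k$: $G_0=G$, runner chooses $v_0$; in round $i\ge1$ the flipper announces a $k$-flip $G_i$ of $G$, the runner moves from $v_{i-1}$ to $v_i$ along a path of length at most $r$ in $G_{i-1}$; the flipper wins if $v_i$ is isolated in $G_i$. $\mathrm{fw}_r(G)$ is the least $k$ for which the flipper has a winning strategy. *)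

theory Defs
  imports Main
begin

definition graph :: "'a set \<Rightarrow> ('a \<Rightarrow> 'a \<Rightarrow> bool) \<Rightarrow> bool" where
  "graph V E \<longleftrightarrow> finite V \<and> (\<forall>x y. E x y \<longrightarrow> x \<in> V \<and> y \<in> V)
     \<and> (\<forall>x y. E x y \<longrightarrow> E y x) \<and> (\<forall>x. \<not> E x x)"

definition degree :: "'a set \<Rightarrow> ('a \<Rightarrow> 'a \<Rightarrow> bool) \<Rightarrow> 'a \<Rightarrow> nat" where
  "degree V E v = card {u \<in> V. E v u}"

definition min_degree_ge :: "'a set \<Rightarrow> ('a \<Rightarrow> 'a \<Rightarrow> bool) \<Rightarrow> nat \<Rightarrow> bool" where
  "min_degree_ge V E d \<longleftrightarrow> (\<forall>v\<in>V. degree V E v \<ge> d)"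

text \<open>Exact s-subdivision. Each edge {u,v} with u < v is replaced by the path
  Inl u, Inr (u,v,1), ..., Inr (u,v,s), Inl v (of length s+1).\<close>

definition sub_node :: "nat \<Rightarrow> 'a \<Rightarrow> 'a \<Rightarrow> nat \<Rightarrow> 'a + ('a \<times> 'a \<times> nat)" where
  "sub_node s u v i = (if i = 0 then Inl u else if i = s + 1 then Inl v else Inr (u, v, i))"

definition subdiv_V :: "nat \<Rightarrow> ('a::linorder) set \<Rightarrow> ('a \<Rightarrow> 'a \<Rightarrow> bool)
    \<Rightarrow> ('a + ('a \<times> 'a \<times> nat)) set" where
  "subdiv_V s V E = Inl ` V \<union> {Inr (u, v, i) | u v i. E u v \<and> u < v \<and> 1 \<le> i \<and> i \<le> s}"

definition subdiv_E :: "nat \<Rightarrow> ('a::linorder) set \<Rightarrow> ('a \<Rightarrow> 'a \<Rightarrow> bool)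
    \<Rightarrow> ('a + ('a \<times> 'a \<times> nat)) \<Rightarrow> ('a + ('a \<times> 'a \<times> nat)) \<Rightarrow> bool" where
  "subdiv_E s V E x y \<longleftrightarrow> (\<exists>u v i. E u v \<and> u < v \<and> i \<le> s \<and>
      ((x = sub_node s u v i \<and> y = sub_node s u v (i + 1)) \<or>
       (y = sub_node s u v i \<and> x = sub_node s u v (i + 1))))"

text \<open>k-flips: a partition of V into at most k parts (given by a labelling p into {0..<k},
  parts = nonempty fibres), and a symmetric set R of pairs of parts whose adjacency is inverted.\<close>

definition is_flip :: "nat \<Rightarrow> 'b set \<Rightarrow> ('b \<Rightarrow> 'b \<Rightarrow> bool) \<Rightarrow> ('b \<Rightarrow> 'b \<Rightarrow> bool) \<Rightarrow> bool" where
  "is_flip k V E F \<longleftrightarrow> (\<exists>(p :: 'b \<Rightarrow> nat) (R :: nat \<Rightarrow> nat \<Rightarrow> bool).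
      (\<forall>x\<in>V. p x < k) \<and> (\<forall>i j. R i j = R j i) \<and>
      (\<forall>x y. F x y \<longleftrightarrow> x \<in> V \<and> y \<in> V \<and> x \<noteq> y \<and> (E x y \<noteq> R (p x) (p y))))"

definition reach_within :: "nat \<Rightarrow> 'b set \<Rightarrow> ('b \<Rightarrow> 'b \<Rightarrow> bool) \<Rightarrow> 'b \<Rightarrow> 'b \<Rightarrow> bool" where
  "reach_within r V E v w \<longleftrightarrow> (\<exists>ps. ps \<noteq> [] \<and> hd ps = v \<and> last ps = w \<and> distinct ps \<and>
      set ps \<subseteq> V \<and> length ps \<le> r + 1 \<and> (\<forall>i < length ps - 1. E (ps ! i) (ps ! (i + 1))))"

definition isolated :: "('b \<Rightarrow> 'b \<Rightarrow> bool) \<Rightarrow> 'b \<Rightarrow> bool" where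
  "isolated F v \<longleftrightarrow> (\<forall>y. \<not> F v y)"

text \<open>A position is the previous graph
  G_{i-1} (current adjacency Ecur) together with the runner's vertex v_{i-1}.
  flipper_wins_from holds iff the flipper can force a win (in finitely many rounds)
  from that position: the least fixpoint (attractor) of the game.\<close>

inductive flipper_wins_from :: "nat \<Rightarrow> nat \<Rightarrow> 'b set \<Rightarrow> ('b \<Rightarrow> 'b \<Rightarrow> bool)
    \<Rightarrow> ('b \<Rightarrow> 'b \<Rightarrow> bool) \<Rightarrow> 'b \<Rightarrow> bool"
  for r k V E where
  step: "is_flip k V E F \<Longrightarrow>
     (\<forall>w. reach_within r V Ecur v w \<longrightarrow> isolated F w \<or> flipper_wins_from r k V E F w) \<Longrightarrow>
     flipper_wins_from r k V E Ecur v"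

definition flipper_wins :: "nat \<Rightarrow> nat \<Rightarrow> 'b set \<Rightarrow> ('b \<Rightarrow> 'b \<Rightarrow> bool) \<Rightarrow> bool" where
  "flipper_wins r k V E \<longleftrightarrow> (\<forall>v0\<in>V. flipper_wins_from r k V E E v0)"

definition fw :: "nat \<Rightarrow> 'b set \<Rightarrow> ('b \<Rightarrow> 'b \<Rightarrow> bool) \<Rightarrow> nat" where
  "fw r V E = (LEAST k. flipper_wins r k V E)"

end

theory Submission
  imports Defs
begin

(* For a vertex x of G and a graph F on the vertices of G, the branch ball of x in F is the set of
   vertices of H within distance r of x in F; the runner keeps her branch ball larger than k.
   Fix a flip F with at most k parts and a vertex u of H, and follow the subdivided edges at u whose
   first edge survives in F. Along each one whose far end is not within distance r of u, the path
   from u is cut at some step, and the position of the cut together with the part of the vertex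
   after it determines the edge: a flip deleting an edge xy adds every non-edge xy' with y' in the
   part of y. So at most (r - 1)k of them are cut, and if at least rk first edges survive, the
   branch ball of u in F is larger than k. Otherwise, by the degree bound, at least rk + 1 first
   edges at u are deleted, hence added at every other u' in the part of u, whose branch ball is
   then large. So at most k vertices of H have a small branch ball in F, and the runner moves to
   one with a large ball, which is not isolated. *)

lemma reach_within_refl: "x \<in> W \<Longrightarrow> reach_within n W F x x"
  unfolding reach_within_def by (rule exI[of _ "[x]"]) auto

lemma reach_within_snoc:
  assumes "reach_within n W F x z" "F z y" "y \<in> W"
  shows "reach_within (Suc n) W F x y"
proof -
  obtain ps where ps: "ps \<noteq> []" "hd ps = x" "last ps = z" "distinct ps" "set ps \<subseteq> W"
    "length ps \<le> n + 1" and steps: "\<forall>i < length ps - 1. F (ps ! i) (ps ! (i + 1))"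
    using assms(1) unfolding reach_within_def by blast
  show ?thesis
  proof (cases "y \<in> set ps")
    case True
    then obtain i where i: "i < length ps" "ps ! i = y" by (meson in_set_conv_nth)
    let ?qs = "take (Suc i) ps"
    have "last ?qs = y" using i by (simp add: take_Suc_conv_app_nth)
    moreover have "\<forall>j < length ?qs - 1. F (?qs ! j) (?qs ! (j + 1))" using steps i by simp
    moreover have "set ?qs \<subseteq> W" using ps(5) set_take_subset by fastforce
    ultimately show ?thesis unfolding reach_within_def
      using ps(1,2,4,6) by (intro exI[of _ ?qs]) simp
  next
    case False
    have "\<forall>i < length (ps @ [y]) - 1. F ((ps @ [y]) ! i) ((ps @ [y]) ! (i + 1))"
    proof (intro allI impI)
      fix i assume i: "i < length (ps @ [y]) - 1"
      show "F ((ps @ [y]) ! i) ((ps @ [y]) ! (i + 1))"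
      proof (cases "Suc i < length ps")
        case True
        then show ?thesis using steps by (simp add: nth_append)
      next
        case False
        then have "i = length ps - 1" using i by simp
        then show ?thesis using ps(1,3) assms(2) by (simp add: nth_append last_conv_nth)
      qed
    qed
    then show ?thesis unfolding reach_within_def
      using ps(1,2,4-6) False assms(3) by (intro exI[of _ "ps @ [y]"]) simp
  qed
qed

lemma reach_within_edge: "x \<in> W \<Longrightarrow> F x y \<Longrightarrow> y \<in> W \<Longrightarrow> reach_within 1 W F x y"
  using reach_within_snoc[OF reach_within_refl] by simp

lemma reach_within_imp_neighbour:
  assumes "reach_within n W F x y" "x \<noteq> y"
  shows "\<exists>z. F x z"
proof -
  obtain ps where ps: "ps \<noteq> []" "hd ps = x" "last ps = y"
    and steps: "\<forall>i < length ps - 1. F (ps ! i) (ps ! (i + 1))"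
    using assms(1) unfolding reach_within_def by blast
  have "1 < length ps"
    using ps assms(2) by (cases ps) auto
  then have "F (ps ! 0) (ps ! 1)" using steps by simp
  then show ?thesis using ps by (auto simp: hd_conv_nth)
qed

lemma ex_last_step:
  assumes "P m" "\<not> P n" "m \<le> n"
  shows "\<exists>a. m \<le> a \<and> a < n \<and> P a \<and> \<not> P (Suc a)"
  using assms
proof (induction n)
  case (Suc n)
  then have "m \<le> n" by (metis le_SucE)
  then show ?case using Suc by (cases "P n") (auto intro: less_SucI)
qed simp

definition flipped :: "'b set \<Rightarrow> ('b \<Rightarrow> 'b \<Rightarrow> bool) \<Rightarrow> ('b \<Rightarrow> nat) \<Rightarrow> (nat \<Rightarrow> nat \<Rightarrow> bool)
    \<Rightarrow> 'b \<Rightarrow> 'b \<Rightarrow> bool" where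
  "flipped W E p R x y \<longleftrightarrow> x \<in> W \<and> y \<in> W \<and> x \<noteq> y \<and> (E x y \<noteq> R (p x) (p y))"

lemma is_flipE:
  assumes "is_flip k W E F"
  obtains p R where "\<forall>x\<in>W. p x < k" "F = flipped W E p R"
proof -
  obtain p R where "\<forall>x\<in>W. p x < k"
    and "\<forall>x y. F x y \<longleftrightarrow> x \<in> W \<and> y \<in> W \<and> x \<noteq> y \<and> (E x y \<noteq> R (p x) (p y))"
    using assms unfolding is_flip_def by blast
  then show thesis using that[of p R] unfolding flipped_def by blast
qed

lemma flipped_twins:
  assumes "p x = p x'" "p y = p y'" "{x, y, x', y'} \<subseteq> W" "x \<noteq> y" "x' \<noteq> y'" "E x y \<noteq> E x' y'"
  shows "flipped W E p R x y \<noteq> flipped W E p R x' y'"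
  using assms unfolding flipped_def by auto

lemma flipper_wins_card:
  assumes "finite W" "\<And>x y. E x y \<Longrightarrow> E y x"
  shows "flipper_wins r (card W) W E"
proof -
  obtain h where h: "bij_betw h W {0..<card W}"
    using ex_bij_betw_finite_nat[OF assms(1)] by blast
  define R where "R i j \<longleftrightarrow> (\<exists>x\<in>W. \<exists>y\<in>W. h x = i \<and> h y = j \<and> E x y)" for i j
  have R: "R (h x) (h y) = E x y" if "x \<in> W" "y \<in> W" for x y
    using that h unfolding R_def bij_betw_def inj_on_def by blast
  \<comment> \<open>labelling the vertices injectively, a single flip deletes every edge\<close>
  have flip: "is_flip (card W) W E (\<lambda>_ _. False)"
    unfolding is_flip_def
  proof (intro exI conjI allI)
    show "\<forall>x\<in>W. h x < card W" using h bij_betwE by fastforce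
    show "R i j = R j i" for i j unfolding R_def using assms(2) by blast
    show "False \<longleftrightarrow> x \<in> W \<and> y \<in> W \<and> x \<noteq> y \<and> (E x y \<noteq> R (h x) (h y))" for x y
      using R by blast
  qed
  show ?thesis
    unfolding flipper_wins_def by (simp add: flipper_wins_from.step[OF flip] isolated_def)
qed

lemma flipper_wins_fw:
  assumes "finite W" "\<And>x y. E x y \<Longrightarrow> E y x"
  shows "flipper_wins r (fw r W E) W E"
  unfolding fw_def by (rule LeastI[of "\<lambda>j. flipper_wins r j W E", OF flipper_wins_card[OF assms]])

lemma sub_node_Inr: "sub_node s u v i = Inr (u', v', m) \<Longrightarrow> u' = u \<and> v' = v"
  unfolding sub_node_def by (auto split: if_splits)

lemma sub_node_cases: "sub_node s u v i \<in> {Inl u, Inl v} \<or> (\<exists>m. sub_node s u v i = Inr (u, v, m))"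
  unfolding sub_node_def by auto

lemma subdiv_E_sym: "subdiv_E s V E x y \<Longrightarrow> subdiv_E s V E y x"
  unfolding subdiv_E_def by blast

lemma subdiv_E_irrefl: "\<not> subdiv_E s V E x x"
  unfolding subdiv_E_def sub_node_def by auto

lemma subdiv_E_Inr:
  assumes "subdiv_E s V E (Inr (u, v, m)) y"
  shows "y \<in> {Inl u, Inl v} \<or> (\<exists>m'. y = Inr (u, v, m'))"
proof -
  obtain u' v' i j where "sub_node s u' v' i = Inr (u, v, m)" "y = sub_node s u' v' j"
    using assms unfolding subdiv_E_def by metis
  moreover from sub_node_Inr[OF this(1)] have "u = u'" "v = v'" by simp_all
  ultimately show ?thesis using sub_node_cases[of s u v j] by simp
qed

locale subdivision =
  fixes r :: nat and V :: "'a::linorder set" and E :: "'a \<Rightarrow> 'a \<Rightarrow> bool"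
  assumes graph: "graph V E" and two_le_r: "2 \<le> r"
begin

abbreviation VG :: "('a + 'a \<times> 'a \<times> nat) set" where
  "VG \<equiv> subdiv_V (r - 1) V E"

abbreviation EG :: "'a + 'a \<times> 'a \<times> nat \<Rightarrow> 'a + 'a \<times> 'a \<times> nat \<Rightarrow> bool" where
  "EG \<equiv> subdiv_E (r - 1) V E"

lemma edge_in_V: "E x y \<Longrightarrow> x \<in> V \<and> y \<in> V"
  and E_sym: "E x y \<Longrightarrow> E y x"
  and E_irrefl: "\<not> E x x"
  and finite_V: "finite V"
  using graph unfolding graph_def by blast+

lemma finite_neighbours: "finite {c'. E c c'}"
  by (rule finite_subset[OF _ finite_V]) (use edge_in_V in blast)

lemma degree_eq_card_neighbours: "degree V E c = card {c'. E c c'}"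
proof -
  have "{c' \<in> V. E c c'} = {c'. E c c'}" using edge_in_V by blast
  then show ?thesis unfolding degree_def by simp
qed

lemma Inl_in_VG: "u \<in> V \<Longrightarrow> Inl u \<in> VG"
  unfolding subdiv_V_def by blast

lemma finite_VG: "finite VG"
proof -
  have "VG \<subseteq> Inl ` V \<union> Inr ` (V \<times> V \<times> {1..r - 1})"
    unfolding subdiv_V_def using edge_in_V by fastforce
  then show ?thesis using finite_V by (simp add: finite_subset)
qed

text \<open>The vertex at distance \<open>a \<le> r\<close> from \<open>Inl c\<close> on the subdivided edge from \<open>c\<close> to \<open>c'\<close>.\<close>

definition edge_vertex :: "'a \<Rightarrow> 'a \<Rightarrow> nat \<Rightarrow> 'a + 'a \<times> 'a \<times> nat" where
  "edge_vertex c c' a = (if c < c' then sub_node (r - 1) c c' a else sub_node (r - 1) c' c (r - a))"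

lemma edge_vertex_0 [simp]: "edge_vertex c c' 0 = Inl c"
  and edge_vertex_r [simp]: "edge_vertex c c' r = Inl c'"
  using two_le_r unfolding edge_vertex_def sub_node_def by auto

lemma edge_vertex_inner:
  "0 < a \<Longrightarrow> a < r \<Longrightarrow> edge_vertex c c' a = Inr (min c c', max c c', if c < c' then a else r - a)"
  unfolding edge_vertex_def sub_node_def by auto

lemma sub_node_in_VG: "E u v \<Longrightarrow> u < v \<Longrightarrow> i \<le> r \<Longrightarrow> sub_node (r - 1) u v i \<in> VG"
  using edge_in_V two_le_r unfolding sub_node_def subdiv_V_def by auto

lemma edge_vertex_in_VG:
  assumes "E c c'" "a \<le> r"
  shows "edge_vertex c c' a \<in> VG"
proof (cases "c < c'")
  case True
  then show ?thesis using sub_node_in_VG assms unfolding edge_vertex_def by simp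
next
  case False
  then have "c' < c" using assms(1) E_irrefl by (metis neqE)
  then show ?thesis using sub_node_in_VG[OF E_sym] assms False unfolding edge_vertex_def by simp
qed

lemma EG_edge_vertex:
  assumes "E c c'" "a < r"
  shows "EG (edge_vertex c c' a) (edge_vertex c c' (Suc a))"
proof (cases "c < c'")
  case True
  then show ?thesis unfolding edge_vertex_def subdiv_E_def using assms
    by (intro exI[of _ c] exI[of _ c'] exI[of _ a]) auto
next
  case False
  then have "c' < c" using assms(1) E_irrefl by (metis neqE)
  moreover have "r - a = Suc (r - Suc a)" using assms(2) by simp
  ultimately show ?thesis unfolding edge_vertex_def subdiv_E_def using E_sym[OF assms(1)] assms(2) False
    by (intro exI[of _ c'] exI[of _ c] exI[of _ "r - Suc a"]) auto
qed

lemma EG_inner_edge_vertex: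
  assumes "0 < a" "a < r" "EG (edge_vertex c c' a) y"
  shows "y \<in> {Inl c, Inl c'} \<or> (\<exists>m. y = Inr (min c c', max c c', m))"
proof -
  have "{Inl (min c c'), Inl (max c c')} = {Inl c, Inl c'}" by (auto simp: min_def max_def)
  then show ?thesis using subdiv_E_Inr assms edge_vertex_inner by metis
qed

lemma edge_vertex_not_adjacent_other_edge:
  assumes "E c c1" "E c c2" "c1 \<noteq> c2" "0 < a" "a < r"
  shows "edge_vertex c c1 a \<noteq> edge_vertex c c2 (Suc a)"
    and "\<not> EG (edge_vertex c c1 a) (edge_vertex c c2 (Suc a))"
proof -
  let ?y = "edge_vertex c c2 (Suc a)"
  have "?y = Inl c2 \<or> (\<exists>m. ?y = Inr (min c c2, max c c2, m))"
    using assms(5) edge_vertex_inner[of "Suc a" c c2] by (cases "Suc a = r") auto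
  moreover have "c2 \<noteq> c" "c2 \<noteq> c1" "(min c c2, max c c2) \<noteq> (min c c1, max c c1)"
    using assms E_irrefl by (auto simp: min_def max_def split: if_splits)
  ultimately have "?y \<notin> {Inl c, Inl c1}" "\<forall>m. ?y \<noteq> Inr (min c c1, max c c1, m)"
    by auto
  then show "edge_vertex c c1 a \<noteq> ?y" "\<not> EG (edge_vertex c c1 a) ?y"
    using edge_vertex_inner[OF assms(4,5)] EG_inner_edge_vertex[OF assms(4,5)] by metis+
qed

lemma Inl_not_adjacent_edge_vertex_1:
  assumes "E c c'" "u \<noteq> c" "u \<noteq> c'"
  shows "Inl u \<noteq> edge_vertex c c' 1" and "\<not> EG (Inl u) (edge_vertex c c' 1)"
  using assms two_le_r edge_vertex_inner[of 1 c c'] EG_inner_edge_vertex[of 1 c c' "Inl u"]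
  by (auto dest: subdiv_E_sym)

definition branch_ball :: "('a + 'a \<times> 'a \<times> nat \<Rightarrow> 'a + 'a \<times> 'a \<times> nat \<Rightarrow> bool)
    \<Rightarrow> 'a + 'a \<times> 'a \<times> nat \<Rightarrow> 'a set" where
  "branch_ball F x = {b \<in> V. reach_within r VG F x (Inl b)}"

lemma finite_branch_ball: "finite (branch_ball F x)"
  unfolding branch_ball_def using finite_V by simp

context
  fixes p :: "'a + 'a \<times> 'a \<times> nat \<Rightarrow> nat" and R :: "nat \<Rightarrow> nat \<Rightarrow> bool" and k :: nat
  assumes parts_lt: "\<forall>x\<in>VG. p x < k"
begin

abbreviation F :: "'a + 'a \<times> 'a \<times> nat \<Rightarrow> 'a + 'a \<times> 'a \<times> nat \<Rightarrow> bool" where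
  "F \<equiv> flipped VG EG p R"

lemma card_unreached_ends_le:
  assumes T: "T \<subseteq> {c'. E c c'}" and first: "\<forall>c'\<in>T. F x0 (edge_vertex c c' 1)"
  shows "card {c'\<in>T. \<not> reach_within r VG F x0 (Inl c')} \<le> (r - 1) * k"
proof -
  let ?reach = "\<lambda>c' a. reach_within a VG F x0 (edge_vertex c c' a)"
  define B where "B = {c'\<in>T. \<not> reach_within r VG F x0 (Inl c')}"
  have "\<forall>c'\<in>B. \<exists>a. 1 \<le> a \<and> a < r \<and> ?reach c' a \<and> \<not> ?reach c' (Suc a)"
  proof (intro ballI ex_last_step)
    fix c' assume "c' \<in> B"
    have "F x0 (edge_vertex c c' 1)" using first \<open>c' \<in> B\<close> unfolding B_def by blast
    then show "?reach c' 1" by (intro reach_within_edge) (auto simp: flipped_def)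
    show "\<not> ?reach c' r" using \<open>c' \<in> B\<close> unfolding B_def by simp
  qed (use two_le_r in simp)
  then obtain A where A: "\<forall>c'\<in>B. 1 \<le> A c' \<and> A c' < r \<and> ?reach c' (A c') \<and> \<not> ?reach c' (Suc (A c'))"
    by (metis bchoice)
  \<comment> \<open>an unreached end is determined by the step where its path is cut and the part of the vertex after the cut\<close>
  have "inj_on (\<lambda>c'. (A c', p (edge_vertex c c' (Suc (A c'))))) B"
  proof (rule inj_onI, rule ccontr)
    fix c1 c2 assume c: "c1 \<in> B" "c2 \<in> B" and ne: "c1 \<noteq> c2"
      and eq: "(A c1, p (edge_vertex c c1 (Suc (A c1)))) = (A c2, p (edge_vertex c c2 (Suc (A c2))))"
    define a where "a = A c1"
    let ?x = "edge_vertex c c1 a" and ?y1 = "edge_vertex c c1 (Suc a)" and ?y2 = "edge_vertex c c2 (Suc a)"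
    have E: "E c c1" "E c c2" using c T unfolding B_def by auto
    have a: "1 \<le> a" "a < r" "?reach c1 a" "\<not> ?reach c1 (Suc a)" "\<not> ?reach c2 (Suc a)"
      using A c eq unfolding a_def by auto
    have in_VG: "{?x, ?y1, ?x, ?y2} \<subseteq> VG" using edge_vertex_in_VG E a(2) by simp
    have same_part: "p ?y1 = p ?y2" using eq unfolding a_def by auto
    have "EG ?x ?y1" using EG_edge_vertex[OF E(1) a(2)] .
    moreover have "\<not> EG ?x ?y2" "?x \<noteq> ?y2"
      using edge_vertex_not_adjacent_other_edge[OF E ne] a(1,2) by auto
    moreover have "?x \<noteq> ?y1" using \<open>EG ?x ?y1\<close> subdiv_E_irrefl by metis
    ultimately have "F ?x ?y1 \<noteq> F ?x ?y2"
      using flipped_twins[OF refl same_part in_VG] by simp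
    then show False
      using a(3-5) reach_within_snoc in_VG by (metis insert_subset)
  qed
  moreover have "(\<lambda>c'. (A c', p (edge_vertex c c' (Suc (A c'))))) ` B \<subseteq> {1..<r} \<times> {..<k}"
    using A T parts_lt edge_vertex_in_VG unfolding B_def by (fastforce simp: Suc_le_eq)
  ultimately have "card B \<le> card ({1..<r} \<times> {..<k})" by (rule card_inj_on_le) simp
  then show ?thesis unfolding B_def by (simp add: card_cartesian_product)
qed

lemma k_lt_card_branch_ball:
  assumes "u \<in> V" "u \<notin> T" and T: "T \<subseteq> {c'. E c c'}"
    and first: "\<forall>c'\<in>T. F (Inl u) (edge_vertex c c' 1)" and "r * k \<le> card T"
  shows "k < card (branch_ball F (Inl u))"
proof -
  let ?reached = "{c'\<in>T. reach_within r VG F (Inl u) (Inl c')}"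
  let ?unreached = "{c'\<in>T. \<not> reach_within r VG F (Inl u) (Inl c')}"
  have "finite T" using T finite_neighbours finite_subset by blast
  have "card T = card ?reached + card ?unreached"
  proof -
    have "card (?reached \<union> ?unreached) = card ?reached + card ?unreached"
      using \<open>finite T\<close> by (intro card_Un_disjoint) auto
    moreover have "?reached \<union> ?unreached = T" by blast
    ultimately show ?thesis by simp
  qed
  moreover have "(r - 1) * k + k = r * k" using two_le_r by (cases r) auto
  ultimately have "k \<le> card ?reached"
    using card_unreached_ends_le[OF T first] \<open>r * k \<le> card T\<close> by linarith
  moreover have "u \<in> branch_ball F (Inl u)"
    unfolding branch_ball_def using assms(1) reach_within_refl[OF Inl_in_VG] by blast
  then have "insert u ?reached \<subseteq> branch_ball F (Inl u)"
    unfolding branch_ball_def using T edge_in_V by auto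
  then have "card (insert u ?reached) \<le> card (branch_ball F (Inl u))"
    by (rule card_mono[OF finite_branch_ball])
  ultimately show ?thesis using \<open>u \<notin> T\<close> \<open>finite T\<close> by simp
qed

lemma small_branch_balls_distinct_parts:
  assumes min_deg: "min_degree_ge V E (2 * r * k)"
    and "u \<in> V" "u' \<in> V" "u \<noteq> u'" "p (Inl u) = p (Inl u')"
    and small: "card (branch_ball F (Inl u)) \<le> k"
  shows "k < card (branch_ball F (Inl u'))"
proof -
  define N where "N = {c'. E u c'}"
  define T where "T = {c'\<in>N. F (Inl u) (edge_vertex u c' 1)}"
  have "card T < r * k"
    using k_lt_card_branch_ball[of u T u] \<open>u \<in> V\<close> small E_irrefl unfolding T_def N_def by fastforce
  moreover have "2 * r * k \<le> card N"
    using min_deg \<open>u \<in> V\<close> unfolding min_degree_ge_def degree_eq_card_neighbours N_def by blast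
  moreover have "card N - card (insert u' T) \<le> card (N - insert u' T)"
    using finite_neighbours unfolding T_def N_def by (intro diff_card_le_card_Diff) auto
  moreover have "card (insert u' T) \<le> card T + 1" by (simp add: card_insert_le_m1)
  ultimately have "r * k \<le> card (N - insert u' T)" by linarith
  \<comment> \<open>the flip deletes the remaining first edges at \<open>Inl u\<close>, so it adds them at its twin \<open>Inl u'\<close>\<close>
  moreover have "F (Inl u') (edge_vertex u c' 1)" if "c' \<in> N - insert u' T" for c'
  proof -
    let ?y = "edge_vertex u c' 1"
    have E: "E u c'" and "c' \<noteq> u'" and no_flip: "\<not> F (Inl u) ?y"
      using that unfolding N_def T_def by auto
    have in_VG: "{Inl u, ?y, Inl u', ?y} \<subseteq> VG"
      using Inl_in_VG \<open>u \<in> V\<close> \<open>u' \<in> V\<close> edge_vertex_in_VG[OF E] two_le_r by simp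
    have "EG (Inl u) ?y" using EG_edge_vertex[OF E, of 0] two_le_r by simp
    moreover have "Inl u \<noteq> ?y" using \<open>EG (Inl u) ?y\<close> subdiv_E_irrefl by metis
    moreover have "Inl u' \<noteq> ?y" "\<not> EG (Inl u') ?y"
      using Inl_not_adjacent_edge_vertex_1[OF E] \<open>u \<noteq> u'\<close> \<open>c' \<noteq> u'\<close> by auto
    ultimately show ?thesis
      using flipped_twins[OF \<open>p (Inl u) = p (Inl u')\<close> refl in_VG] no_flip by auto
  qed
  moreover have "u' \<notin> N - insert u' T" by blast
  ultimately show ?thesis
    using k_lt_card_branch_ball[of u' "N - insert u' T" u] \<open>u' \<in> V\<close> unfolding N_def by blast
qed

lemma card_small_branch_balls_le:
  assumes "min_degree_ge V E (2 * r * k)"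
  shows "card {u\<in>V. card (branch_ball F (Inl u)) \<le> k} \<le> k"
proof -
  have "inj_on (\<lambda>u. p (Inl u)) {u\<in>V. card (branch_ball F (Inl u)) \<le> k}"
    using small_branch_balls_distinct_parts[OF assms] by (fastforce intro: inj_onI)
  moreover have "(\<lambda>u. p (Inl u)) ` {u\<in>V. card (branch_ball F (Inl u)) \<le> k} \<subseteq> {..<k}"
    using parts_lt Inl_in_VG by blast
  ultimately have "card {u\<in>V. card (branch_ball F (Inl u)) \<le> k} \<le> card {..<k}"
    by (rule card_inj_on_le) simp
  then show ?thesis by simp
qed

end

lemma card_branch_ball_le_if_flipper_wins:
  assumes "flipper_wins_from r j VG EG G v" "j \<le> k" "1 \<le> k" "min_degree_ge V E (2 * r * k)"
  shows "card (branch_ball G v) \<le> k"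
  using assms(1)
proof (induction rule: flipper_wins_from.induct)
  case (step F G v)
  obtain p R where parts: "\<forall>x\<in>VG. p x < j" and F: "F = flipped VG EG p R"
    using is_flipE[OF step.hyps(1)] .
  have "\<forall>x\<in>VG. p x < k" using parts assms(2) by fastforce
  then have few_small: "card {b\<in>V. card (branch_ball F (Inl b)) \<le> k} \<le> k"
    unfolding F by (rule card_small_branch_balls_le[OF _ assms(4)])
  show ?case
  proof (rule ccontr)
    assume large_G: "\<not> card (branch_ball G v) \<le> k"
    have "\<not> branch_ball G v \<subseteq> {b\<in>V. card (branch_ball F (Inl b)) \<le> k}"
    proof
      assume "branch_ball G v \<subseteq> {b\<in>V. card (branch_ball F (Inl b)) \<le> k}"
      then have "card (branch_ball G v) \<le> card {b\<in>V. card (branch_ball F (Inl b)) \<le> k}"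
        by (rule card_mono[rotated]) (simp add: finite_V)
      then show False using few_small large_G by simp
    qed
    then obtain b where b: "b \<in> branch_ball G v" and "b \<notin> {b\<in>V. card (branch_ball F (Inl b)) \<le> k}"
      by blast
    moreover have "b \<in> V" using b unfolding branch_ball_def by simp
    ultimately have large: "k < card (branch_ball F (Inl b))" by simp
    have "\<not> branch_ball F (Inl b) \<subseteq> {b}"
    proof
      assume "branch_ball F (Inl b) \<subseteq> {b}"
      then have "card (branch_ball F (Inl b)) \<le> card {b}" by (rule card_mono[rotated]) simp
      then show False using large assms(3) by simp
    qed
    then obtain b' where "b' \<in> branch_ball F (Inl b)" "b' \<noteq> b" by blast
    then have "reach_within r VG F (Inl b) (Inl b')" "Inl b \<noteq> Inl b'"
      unfolding branch_ball_def by simp_all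
    then have "\<not> isolated F (Inl b)"
      using reach_within_imp_neighbour unfolding isolated_def by metis
    moreover have "reach_within r VG G v (Inl b)" using b unfolding branch_ball_def by blast
    ultimately have "card (branch_ball F (Inl b)) \<le> k" using step.IH by blast
    then show False using large by simp
  qed
qed

lemma degree_lt_card_branch_ball:
  assumes "a \<in> V"
  shows "degree V E a < card (branch_ball EG (Inl a))"
proof -
  have "reach_within i VG EG (Inl a) (edge_vertex a c' i)" if "E a c'" "i \<le> r" for c' i
    using that(2)
  proof (induction i)
    case 0
    then show ?case using reach_within_refl[OF Inl_in_VG[OF assms]] by simp
  next
    case (Suc i)
    then have "i < r" and IH: "reach_within i VG EG (Inl a) (edge_vertex a c' i)" by simp_all
    show ?case
      using reach_within_snoc[OF IH EG_edge_vertex[OF that(1) \<open>i < r\<close>]]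
        edge_vertex_in_VG[OF that(1) Suc.prems] .
  qed
  then have "{c'. E a c'} \<subseteq> branch_ball EG (Inl a)"
    unfolding branch_ball_def using edge_in_V edge_vertex_r by fastforce
  moreover have "a \<in> branch_ball EG (Inl a)"
    unfolding branch_ball_def using assms reach_within_refl[OF Inl_in_VG] by blast
  ultimately have "card (insert a {c'. E a c'}) \<le> card (branch_ball EG (Inl a))"
    by (intro card_mono finite_branch_ball) simp
  then show ?thesis
    using E_irrefl finite_neighbours unfolding degree_eq_card_neighbours by simp
qed

end

theorem mainTheorem10:
  fixes r k :: nat and V :: "('a::linorder) set" and E :: "'a \<Rightarrow> 'a \<Rightarrow> bool"
  assumes "r \<ge> 2" and "k \<ge> 1"
    and "graph V E" and "V \<noteq> {}"
    and "min_degree_ge V E (2 * r * k)"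
  shows "fw r (subdiv_V (r - 1) V E) (subdiv_E (r - 1) V E) > k"
proof (rule ccontr)
  interpret subdivision r V E using assms by unfold_locales
  assume "\<not> k < fw r VG EG"
  obtain a where "a \<in> V" using assms(4) by blast
  have "flipper_wins r (fw r VG EG) VG EG" using flipper_wins_fw[OF finite_VG subdiv_E_sym] .
  then have "flipper_wins_from r (fw r VG EG) VG EG EG (Inl a)"
    using Inl_in_VG[OF \<open>a \<in> V\<close>] unfolding flipper_wins_def by blast
  then have "card (branch_ball EG (Inl a)) \<le> k"
    using card_branch_ball_le_if_flipper_wins \<open>\<not> k < fw r VG EG\<close> assms(2,5) by simp
  moreover have "k \<le> 2 * r * k" using assms(1) by simp
  moreover have "2 * r * k \<le> degree V E a"
    using assms(5) \<open>a \<in> V\<close> unfolding min_degree_ge_def by blast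
  ultimately show False using degree_lt_card_branch_ball[OF \<open>a \<in> V\<close>] by linarith
qed

end
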